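(* Let $(G,\phi,(g_1,\dots,g_n))$ and $(G',\phi',(g_1',\dots,g_n'))$ be $n$-expansion groups. Let $G''$ be the subgroup of $G\times G'$ generated by the pairs $g_i''=(g_i,g_i')$, $i\in[n]$, and let $\phi'':G''\to V_{[n]}$ be $\phi''(x,x')=\phi(x)$. Then $(G'',\phi'',(g_1'',\dots,g_n''))$ is an $n$-expansion group.
   Context: $V_{[n]}=\mathbb{F}_2^n$ with basis $e_1,\dots,e_n$. An $n$-expansion group is a triple $(G,\phi,(g_1,\dots,g_n))$: $G$ a group, $\phi:G\to V_{[n]}$ a homomorphism with $\phi(g_i)=e_i$, $g_i^2=1$ for all $i$, $\ker\phi$ an elementary abelian $2$-group, and $[G,G]=\ker\phi$. Note that $G''$ is contained in the fibered product of $G$ and $G'$ over $V_{[n]}$, so $\phi(x)=\phi'(x')$ for $(x,x')\in G''$. *)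

theory Defs
  imports "HOL-Algebra.Algebra"
begin

text \<open>V_[n] = F_2^n, realised as the subsets of [n] = {1..n} under symmetric
  difference; the basis vector e_i is the singleton {i}.\<close>
definition Vn :: "nat \<Rightarrow> nat set monoid" where
  "Vn n = \<lparr> carrier = Pow {1..n}, monoid.mult = (\<lambda>A B. (A - B) \<union> (B - A)), one = {} \<rparr>"

definition basis_e :: "nat \<Rightarrow> nat set" where
  "basis_e i = {i}"

definition elementary_abelian_2 :: "('a, 'm) monoid_scheme \<Rightarrow> 'a set \<Rightarrow> bool" where
  "elementary_abelian_2 G K \<longleftrightarrow> subgroup K G \<and>
     (\<forall>x\<in>K. \<forall>y\<in>K. x \<otimes>\<^bsub>G\<^esub> y = y \<otimes>\<^bsub>G\<^esub> x) \<and>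
     (\<forall>x\<in>K. x \<otimes>\<^bsub>G\<^esub> x = \<one>\<^bsub>G\<^esub>)"

definition expansion_group ::
  "nat \<Rightarrow> ('a, 'm) monoid_scheme \<Rightarrow> ('a \<Rightarrow> nat set) \<Rightarrow> (nat \<Rightarrow> 'a) \<Rightarrow> bool" where
  "expansion_group n G phi g \<longleftrightarrow>
     group G \<and> phi \<in> hom G (Vn n) \<and>
     (\<forall>i\<in>{1..n}. g i \<in> carrier G \<and> phi (g i) = basis_e i \<and> g i \<otimes>\<^bsub>G\<^esub> g i = \<one>\<^bsub>G\<^esub>) \<and>
     elementary_abelian_2 G (kernel G (Vn n) phi) \<and>
     derived G (carrier G) = kernel G (Vn n) phi"

end

theory Submission
  imports Defs
begin

(* Write G'' for the subgroup generated by the pairs g_i''.  The homomorphisms phi o fst and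
   phi' o snd from G'' to V_[n] agree on the generators, hence everywhere, so the kernel of phi''
   lies in ker phi x ker phi' and is elementary abelian.  The commutator subgroup D of G'' lies in
   the kernel because V_[n] is abelian.  Conversely G''/D is abelian and generated by the
   involutions g_i'' D, so A |-> prod_{i in A} g_i'' D is a homomorphism V_[n] -> G''/D through
   which the quotient map factors via phi''; hence ker phi'' is contained in D. *)

lemma carrier_Vn [simp]: "carrier (Vn n) = Pow {1..n}"
  and mult_Vn [simp]: "A \<otimes>\<^bsub>Vn n\<^esub> B = (A - B) \<union> (B - A)"
  and one_Vn [simp]: "\<one>\<^bsub>Vn n\<^esub> = {}"
  by (simp_all add: Vn_def)

lemma comm_group_Vn: "comm_group (Vn n)"
proof (rule comm_groupI)
  fix A B C assume "A \<in> carrier (Vn n)" "B \<in> carrier (Vn n)" "C \<in> carrier (Vn n)"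
  show "A \<otimes>\<^bsub>Vn n\<^esub> B \<otimes>\<^bsub>Vn n\<^esub> C = A \<otimes>\<^bsub>Vn n\<^esub> (B \<otimes>\<^bsub>Vn n\<^esub> C)"
    by auto
next
  fix A assume "A \<in> carrier (Vn n)"
  then show "\<exists>B\<in>carrier (Vn n). B \<otimes>\<^bsub>Vn n\<^esub> A = \<one>\<^bsub>Vn n\<^esub>"
    by auto
qed auto

lemma (in comm_group) finprod_symdiff:
  assumes "finite A" "finite B" "q \<in> A \<union> B \<rightarrow> carrier G"
    and "\<And>i. i \<in> A \<inter> B \<Longrightarrow> q i \<otimes> q i = \<one>"
  shows "finprod G q A \<otimes> finprod G q B = finprod G q ((A - B) \<union> (B - A))"
proof -
  let ?a = "finprod G q (A - B)" and ?b = "finprod G q (B - A)" and ?c = "finprod G q (A \<inter> B)"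
  have closed: "?a \<in> carrier G" "?b \<in> carrier G" "?c \<in> carrier G"
    using assms(3) by (auto intro: finprod_closed)
  have "finprod G q A = finprod G q ((A - B) \<union> (A \<inter> B))"
    by (simp add: Un_Diff_Int)
  also have "\<dots> = ?a \<otimes> ?c"
    using assms(1,3) by (intro finprod_Un_disjoint) auto
  finally have A: "finprod G q A = ?a \<otimes> ?c" .
  have "finprod G q B = finprod G q ((B - A) \<union> (A \<inter> B))"
    by (metis Int_commute Un_Diff_Int)
  also have "\<dots> = ?b \<otimes> ?c"
    using assms(2,3) by (intro finprod_Un_disjoint) auto
  finally have B: "finprod G q B = ?b \<otimes> ?c" .
  have "?c \<otimes> ?c = finprod G (\<lambda>i. q i \<otimes> q i) (A \<inter> B)"
    using assms(3) by (intro finprod_multf [symmetric]) auto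
  also have "\<dots> = \<one>"
    using assms(4) by (intro finprod_one_eqI) blast
  finally have square: "?c \<otimes> ?c = \<one>" .
  have "finprod G q ((A - B) \<union> (B - A)) = ?a \<otimes> ?b"
    using assms(1-3) by (intro finprod_Un_disjoint) auto
  with A B square closed show ?thesis
    by (metis m_assoc m_comm m_closed r_one)
qed

lemma (in comm_group) finprod_hom_Vn:
  assumes "q \<in> {1..n} \<rightarrow> carrier G" "\<And>i. i \<in> {1..n} \<Longrightarrow> q i \<otimes> q i = \<one>"
  shows "finprod G q \<in> hom (Vn n) G"
proof (rule homI)
  fix A B assume "A \<in> carrier (Vn n)" "B \<in> carrier (Vn n)"
  then have "A \<subseteq> {1..n}" "B \<subseteq> {1..n}"
    by auto
  then show "finprod G q (A \<otimes>\<^bsub>Vn n\<^esub> B) = finprod G q A \<otimes> finprod G q B"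
    using assms by (subst mult_Vn, intro finprod_symdiff [symmetric]) (auto intro: finite_subset)
qed (use assms(1) in \<open>auto intro!: finprod_closed\<close>)

lemma (in group) hom_eq_on_generate:
  assumes "group H" "f \<in> hom G H" "f' \<in> hom G H" "S \<subseteq> carrier G"
    and "\<And>s. s \<in> S \<Longrightarrow> f s = f' s" and "x \<in> generate G S"
  shows "f x = f' x"
proof -
  interpret f: group_hom G H f
    using assms(1,2) by (simp add: group_hom_def group_hom_axioms_def is_group)
  interpret f': group_hom G H f'
    using assms(1,3) by (simp add: group_hom_def group_hom_axioms_def is_group)
  from assms(6) show ?thesis
  proof (induction x rule: generate.induct)
    case (incl s)
    then show ?case
      using assms(5) by blast
  next
    case (inv s)
    then show ?case
      using assms(4,5) by (metis f.hom_inv f'.hom_inv subsetD)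
  next
    case (eng x y)
    then show ?case
      using assms(4) by (metis generate_in_carrier f.hom_mult f'.hom_mult)
  qed simp
qed

lemma (in group) derived_subset_kernel:
  assumes "comm_group H" "h \<in> hom G H"
  shows "derived G (carrier G) \<subseteq> kernel G H h"
proof -
  interpret h: group_hom G H h
    using assms by (simp add: group_hom_def group_hom_axioms_def comm_group.axioms(2))
  have "h ` derived G (carrier G) = derived H (h ` carrier G)"
    by (simp add: h.derived_img)
  also have "\<dots> = {\<one>\<^bsub>H\<^esub>}"
    using assms(1) by (simp add: comm_group.derived_eq_singleton h.hom_closed image_subset_iff)
  finally show ?thesis
    using derived_incl[OF subset_refl subgroup_self] by (auto simp: kernel_def)
qed

lemma (in group) kernel_Vn_subset_derived:
  assumes gen: "carrier G = generate G (s ` {1..n})"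
    and s: "\<And>i. i \<in> {1..n} \<Longrightarrow> s i \<in> carrier G" "\<And>i. i \<in> {1..n} \<Longrightarrow> s i \<otimes> s i = \<one>"
    and psi: "psi \<in> hom G (Vn n)" "\<And>i. i \<in> {1..n} \<Longrightarrow> psi (s i) = {i}"
  shows "kernel G (Vn n) psi \<subseteq> derived G (carrier G)"
proof
  define D where "D = derived G (carrier G)"
  interpret D: normal D G
    unfolding D_def by (rule derived_self_is_normal)
  define Q where "Q = G Mod D"
  interpret Q: comm_group Q
    unfolding Q_def D_def by (rule derived_quot_is_comm_group)
  define \<pi> where "\<pi> = (\<lambda>x. D #> x)"
  have \<pi>: "\<pi> \<in> hom G Q"
    unfolding \<pi>_def Q_def by (rule D.r_coset_hom_Mod)
  define \<rho> where "\<rho> = finprod Q (\<lambda>i. \<pi> (s i))"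
  have \<pi>_s_square: "\<pi> (s i) \<otimes>\<^bsub>Q\<^esub> \<pi> (s i) = \<one>\<^bsub>Q\<^esub>" if "i \<in> {1..n}" for i
    using \<pi> s[OF that] by (metis hom_mult Q_def one_FactGroup coset_mult_one D.subset \<pi>_def)
  have \<rho>: "\<rho> \<in> hom (Vn n) Q"
    unfolding \<rho>_def using \<pi> s \<pi>_s_square by (intro Q.finprod_hom_Vn) (auto simp: hom_def)
  have factor: "\<pi> x = (\<rho> \<circ> psi) x" if "x \<in> carrier G" for x
  proof (rule hom_eq_on_generate [where S = "s ` {1..n}"])
    show "\<rho> \<circ> psi \<in> hom G Q"
      using psi(1) \<rho> by (rule Group.hom_compose)
    show "\<pi> y = (\<rho> \<circ> psi) y" if "y \<in> s ` {1..n}" for y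
      using that \<pi> s(1) by (auto simp: psi(2) \<rho>_def hom_def Pi_iff)
  qed (use \<pi> s(1) gen that Q.is_group in auto)
  fix k assume "k \<in> kernel G (Vn n) psi"
  then have "k \<in> carrier G" "psi k = {}"
    by (auto simp: kernel_def)
  then have "D #> k = \<rho> {}"
    using factor by (simp add: \<pi>_def)
  also have "\<dots> = D"
    unfolding \<rho>_def Q.finprod_empty by (simp add: Q_def)
  finally have "D #> k = D" .
  then show "k \<in> derived G (carrier G)"
    using coset_join1[OF _ \<open>k \<in> carrier G\<close> D.subgroup_axioms] by (simp add: D_def)
qed

lemma (in group) expansion_groupI:
  assumes gen: "carrier G = generate G (s ` {1..n})"
    and s: "\<And>i. i \<in> {1..n} \<Longrightarrow> s i \<in> carrier G" "\<And>i. i \<in> {1..n} \<Longrightarrow> s i \<otimes> s i = \<one>"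
    and psi: "psi \<in> hom G (Vn n)" "\<And>i. i \<in> {1..n} \<Longrightarrow> psi (s i) = {i}"
    and "elementary_abelian_2 G (kernel G (Vn n) psi)"
  shows "expansion_group n G psi s"
  unfolding expansion_group_def basis_e_def
  using is_group assms derived_subset_kernel [OF comm_group_Vn psi(1)]
    kernel_Vn_subset_derived [OF gen s psi]
  by blast

lemma expansion_groupD:
  assumes "expansion_group n G phi g"
  shows "group G" "phi \<in> hom G (Vn n)" "elementary_abelian_2 G (kernel G (Vn n) phi)"
    and "\<And>i. i \<in> {1..n} \<Longrightarrow> g i \<in> carrier G" "\<And>i. i \<in> {1..n} \<Longrightarrow> phi (g i) = {i}"
    and "\<And>i. i \<in> {1..n} \<Longrightarrow> g i \<otimes>\<^bsub>G\<^esub> g i = \<one>\<^bsub>G\<^esub>"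
  using assms by (auto simp: expansion_group_def basis_e_def)

lemma (in group) carrier_subgroup_generated_eq_generate:
  assumes "S \<subseteq> carrier G"
  shows "carrier (subgroup_generated G S) = generate (subgroup_generated G S) S"
proof -
  have "carrier (subgroup_generated G S) = carrier (subgroup_generated (subgroup_generated G S) S)"
    by simp
  also have "\<dots> = generate (subgroup_generated G S) (carrier (subgroup_generated G S) \<inter> S)"
    by (rule carrier_subgroup_generated)
  also have "carrier (subgroup_generated G S) \<inter> S = S"
    using subgroup_generated_subset_carrier_subset [OF assms] by blast
  finally show ?thesis .
qed

lemma hom_fst_eq_hom_snd_on_generate:
  assumes "group G" "group G'" "group K" "f \<in> hom G K" "f' \<in> hom G' K"
    and "S \<subseteq> carrier G \<times> carrier G'" "\<And>x x'. (x, x') \<in> S \<Longrightarrow> f x = f' x'"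
    and "(x, x') \<in> generate (G \<times>\<times> G') S"
  shows "f x = f' x'"
proof -
  have "(f \<circ> fst) (x, x') = (f' \<circ> snd) (x, x')"
  proof (rule group.hom_eq_on_generate [where S = S])
    show "group (G \<times>\<times> G')"
      using assms(1,2) by (rule DirProd_group)
    show "f \<circ> fst \<in> hom (G \<times>\<times> G') K" "f' \<circ> snd \<in> hom (G \<times>\<times> G') K"
      using assms(1,2,4,5) by (simp_all add: hom_of_fst hom_of_snd)
  qed (use assms(3,6-8) in auto)
  then show ?thesis
    by simp
qed

lemma kernel_subgroup_generated_DirProd_subset:
  assumes "group G" "group G'" "group K" "f \<in> hom G K" "f' \<in> hom G' K"
    and "S \<subseteq> carrier G \<times> carrier G'" "\<And>x x'. (x, x') \<in> S \<Longrightarrow> f x = f' x'"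
  shows "kernel (subgroup_generated (G \<times>\<times> G') S) K (f \<circ> fst) \<subseteq> kernel G K f \<times> kernel G' K f'"
proof
  fix y assume "y \<in> kernel (subgroup_generated (G \<times>\<times> G') S) K (f \<circ> fst)"
  then have y: "y \<in> generate (G \<times>\<times> G') S" "f (fst y) = \<one>\<^bsub>K\<^esub>"
    using assms(6) by (auto simp: kernel_def carrier_subgroup_generated Int_absorb1)
  then have "y \<in> carrier G \<times> carrier G'"
    using group.generate_in_carrier [OF DirProd_group [OF assms(1,2)]] assms(6) by auto
  moreover have "f (fst y) = f' (snd y)"
    using hom_fst_eq_hom_snd_on_generate [OF assms, of "fst y" "snd y"] y(1) by simp
  ultimately show "y \<in> kernel G K f \<times> kernel G' K f'"
    using y(2) by (auto simp: kernel_def)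
qed

lemma elementary_abelian_2_subgroup_DirProd:
  assumes "elementary_abelian_2 G K" "elementary_abelian_2 G' K'"
    and "subgroup L (subgroup_generated (G \<times>\<times> G') S)" "L \<subseteq> K \<times> K'"
  shows "elementary_abelian_2 (subgroup_generated (G \<times>\<times> G') S) L"
  unfolding elementary_abelian_2_def
proof (intro conjI ballI)
  have comm: "\<forall>x\<in>K. \<forall>y\<in>K. x \<otimes>\<^bsub>G\<^esub> y = y \<otimes>\<^bsub>G\<^esub> x" "\<forall>x\<in>K'. \<forall>y\<in>K'. x \<otimes>\<^bsub>G'\<^esub> y = y \<otimes>\<^bsub>G'\<^esub> x"
    and square: "\<forall>x\<in>K. x \<otimes>\<^bsub>G\<^esub> x = \<one>\<^bsub>G\<^esub>" "\<forall>x\<in>K'. x \<otimes>\<^bsub>G'\<^esub> x = \<one>\<^bsub>G'\<^esub>"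
    using assms(1,2) unfolding elementary_abelian_2_def by blast+
  fix x y assume "x \<in> L" "y \<in> L"
  then have "fst x \<in> K" "snd x \<in> K'" "fst y \<in> K" "snd y \<in> K'"
    using assms(4) by auto
  then show "x \<otimes>\<^bsub>subgroup_generated (G \<times>\<times> G') S\<^esub> y = y \<otimes>\<^bsub>subgroup_generated (G \<times>\<times> G') S\<^esub> x"
    and "x \<otimes>\<^bsub>subgroup_generated (G \<times>\<times> G') S\<^esub> x = \<one>\<^bsub>subgroup_generated (G \<times>\<times> G') S\<^esub>"
    using comm square by (simp_all add: mult_DirProd')
qed (rule assms(3))

theorem proposition3p13:
  fixes G :: "('a, 'm) monoid_scheme" and G' :: "('b, 'k) monoid_scheme"
    and phi :: "'a \<Rightarrow> nat set" and phi' :: "'b \<Rightarrow> nat set"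
    and g :: "nat \<Rightarrow> 'a" and g' :: "nat \<Rightarrow> 'b"
  assumes "expansion_group n G phi g"
    and "expansion_group n G' phi' g'"
  shows "expansion_group n
           ((G \<times>\<times> G')\<lparr>carrier := generate (G \<times>\<times> G') ((\<lambda>i. (g i, g' i)) ` {1..n})\<rparr>)
           (\<lambda>(x, x'). phi x)
           (\<lambda>i. (g i, g' i))"
proof -
  define s where "s = (\<lambda>i. (g i, g' i))"
  define H where "H = subgroup_generated (G \<times>\<times> G') (s ` {1..n})"
  note G = expansion_groupD [OF assms(1)] and G' = expansion_groupD [OF assms(2)]
  interpret P: group "G \<times>\<times> G'"
    using G(1) G'(1) by (rule DirProd_group)
  interpret H: group H
    unfolding H_def by (rule P.group_subgroup_generated)
  have s_carrier: "s ` {1..n} \<subseteq> carrier G \<times> carrier G'"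
    using G(4) G'(4) by (auto simp: s_def)
  have Vn: "group (Vn n)"
    using comm_group_Vn by (rule comm_group.axioms(2))
  have hom: "phi \<circ> fst \<in> hom H (Vn n)"
    using G(2) G'(1) unfolding H_def by (simp add: P.hom_from_subgroup_generated hom_of_fst)
  have "kernel H (Vn n) (phi \<circ> fst) \<subseteq> kernel G (Vn n) phi \<times> kernel G' (Vn n) phi'"
    unfolding H_def using G(5) G'(5)
    by (intro kernel_subgroup_generated_DirProd_subset [OF G(1) G'(1) Vn G(2) G'(2) s_carrier])
      (auto simp: s_def)
  moreover have "subgroup (kernel H (Vn n) (phi \<circ> fst)) H"
    using hom Vn by (intro group_hom.subgroup_kernel) (simp add: group_hom_def group_hom_axioms_def)
  ultimately have "elementary_abelian_2 H (kernel H (Vn n) (phi \<circ> fst))"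
    using elementary_abelian_2_subgroup_DirProd [OF G(3) G'(3)] unfolding H_def by blast
  then have "expansion_group n H (phi \<circ> fst) s"
    using s_carrier G(4-6) G'(4-6) hom
    by (intro H.expansion_groupI) (auto simp: H_def s_def P.carrier_subgroup_generated_eq_generate
        P.subgroup_generated_subset_carrier_subset generate.incl)
  moreover have "(\<lambda>(x, x'). phi x) = phi \<circ> fst"
    by auto
  moreover have "(G \<times>\<times> G')\<lparr>carrier := generate (G \<times>\<times> G') (s ` {1..n})\<rparr> = H"
    using s_carrier by (simp add: H_def subgroup_generated_def Int_absorb1)
  ultimately show ?thesis
    unfolding s_def by metis
qed

end
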